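(* If $\Lambda$ is a subgroup of a group $\Gamma$, then $\mathrm{Lit}(\Lambda)\le\mathrm{Lit}(\Gamma)$.
   Context: $T_1(\Gamma)$ is the space of all $f\colon\Gamma\to\mathbf{C}$ for which there exist $f_1,f_2\colon\Gamma\times\Gamma\to\mathbf{C}$ with $f(x^{-1}y)=f_1(x,y)+f_2(x,y)$ for all $x,y$, $\sup_x\sum_y|f_1(x,y)|<\infty$, $\sup_y\sum_x|f_2(x,y)|<\infty$; $\mathrm{Lit}(\Gamma)=\inf\{p>0:T_1(\Gamma)\subseteq\ell^p(\Gamma)\}\in[0,\infty]$. *)

theory Defs
  imports "HOL-Analysis.Analysis" "HOL-Algebra.Group"
begin

definition T1 :: "('a, 'b) monoid_scheme \<Rightarrow> ('a \<Rightarrow> complex) set" where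
  "T1 G = {f. \<exists>f1 f2 :: 'a \<Rightarrow> 'a \<Rightarrow> complex.
      (\<forall>x\<in>carrier G. \<forall>y\<in>carrier G. f (inv\<^bsub>G\<^esub> x \<otimes>\<^bsub>G\<^esub> y) = f1 x y + f2 x y) \<and>
      (SUP x\<in>carrier G. \<Sum>\<^sub>\<infinity> y\<in>carrier G. ennreal (norm (f1 x y))) < \<infinity> \<and>
      (SUP y\<in>carrier G. \<Sum>\<^sub>\<infinity> x\<in>carrier G. ennreal (norm (f2 x y))) < \<infinity>}"

definition lp :: "('a, 'b) monoid_scheme \<Rightarrow> real \<Rightarrow> ('a \<Rightarrow> complex) set" where
  "lp G p = {f. (\<Sum>\<^sub>\<infinity> x\<in>carrier G. ennreal (norm (f x) powr p)) < \<infinity>}"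

definition Lit :: "('a, 'b) monoid_scheme \<Rightarrow> ereal" where
  "Lit G = Inf (ereal ` {p::real. p > 0 \<and> T1 G \<subseteq> lp G p})"

end

(* Extend f in T_1(H) by zero to G. Pick a representative r y of each left coset y H and
   write y = r y * c y with c y in H. Then c maps every left coset injectively into H, and
   x^-1 y = (c x)^-1 (c y) whenever x H = y H. Hence the kernels f_i (c x) (c y), cut off to
   pairs in the same coset, decompose the extension, and each row (column) sum is bounded
   by a row (column) sum of f_i. So T_1(G) in l^p(G) forces T_1(H) in l^p(H), and the
   infimum defining Lit(H) ranges over a larger set of exponents. *)

theory Submission
  imports Defs "HOL-Algebra.Left_Coset"
begin

\<comment> \<open>The ASCII syntax of strict submultisets clashes with left cosets \<open>x <# H\<close>.\<close>
no_notation (ASCII) subset_mset (infix \<open><#\<close> 50)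

lemma infsum_le_infsum_superset_ennreal:
  fixes F :: "'a \<Rightarrow> ennreal"
  assumes "A \<subseteq> B"
  shows "(\<Sum>\<^sub>\<infinity>x\<in>A. F x) \<le> (\<Sum>\<^sub>\<infinity>x\<in>B. F x)"
  by (rule infsum_mono_neutral) (use assms in \<open>auto intro: nonneg_summable_on_complete\<close>)

lemma lp_restrict_carrier:
  assumes "H \<subseteq> carrier G" and "(\<lambda>x. if x \<in> H then f x else 0) \<in> lp G p"
  shows "f \<in> lp (G\<lparr>carrier := H\<rparr>) p"
proof -
  have "(\<Sum>\<^sub>\<infinity>x\<in>H. ennreal (norm (f x) powr p))
      = (\<Sum>\<^sub>\<infinity>x\<in>H. ennreal (norm (if x \<in> H then f x else 0) powr p))"
    by (rule infsum_cong) simp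
  also have "\<dots> \<le> (\<Sum>\<^sub>\<infinity>x\<in>carrier G. ennreal (norm (if x \<in> H then f x else 0) powr p))"
    by (rule infsum_le_infsum_superset_ennreal[OF assms(1)])
  also have "\<dots> < \<infinity>"
    using assms(2) by (simp add: lp_def)
  finally show ?thesis by (simp add: lp_def)
qed

context group
begin

definition coset_rep :: "'a set \<Rightarrow> 'a \<Rightarrow> 'a" where
  "coset_rep H y = (SOME z. z \<in> y <# H)"

definition coset_coord :: "'a set \<Rightarrow> 'a \<Rightarrow> 'a" where
  "coset_coord H y = inv (coset_rep H y) \<otimes> y"

lemma lcos_eq_iff:
  assumes "subgroup H G" "x \<in> carrier G" "y \<in> carrier G"
  shows "x <# H = y <# H \<longleftrightarrow> inv x \<otimes> y \<in> H"
proof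
  assume "x <# H = y <# H"
  then have "y \<in> x <# H" using lcos_self assms by blast
  then show "inv x \<otimes> y \<in> H"
    using assms subgroup.lcos_module_imp[OF assms(1) is_group] by blast
next
  assume "inv x \<otimes> y \<in> H"
  then show "x <# H = y <# H"
    using assms l_repr_independence subgroup.lcos_module_rev[OF assms(1) is_group] by blast
qed

lemma mem_lcos_iff_lcos_eq:
  assumes "subgroup H G" "x \<in> carrier G"
  shows "y \<in> x <# H \<longleftrightarrow> y \<in> carrier G \<and> x <# H = y <# H"
  using assms l_coset_carrier l_repr_independence lcos_self by metis

lemma coset_rep_closed:
  assumes "subgroup H G" "y \<in> carrier G"
  shows "coset_rep H y \<in> carrier G" and "y \<in> coset_rep H y <# H"
proof -
  have "coset_rep H y \<in> y <# H"
    unfolding coset_rep_def by (rule someI) (rule lcos_self[OF assms(2,1)])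
  then show "coset_rep H y \<in> carrier G" and "y \<in> coset_rep H y <# H"
    using assms l_coset_carrier l_coset_swap by blast+
qed

lemma coset_coord_in_subgroup:
  assumes "subgroup H G" "y \<in> carrier G"
  shows "coset_coord H y \<in> H"
  unfolding coset_coord_def
  using subgroup.lcos_module_imp[OF assms(1) is_group coset_rep_closed[OF assms]] .

lemma inv_coset_coord_mult_coset_coord:
  assumes "subgroup H G" "x \<in> carrier G" "y \<in> carrier G" "x <# H = y <# H"
  shows "inv (coset_coord H x) \<otimes> coset_coord H y = inv x \<otimes> y"
proof -
  define r where "r = coset_rep H x"
  have r: "r \<in> carrier G" and "coset_rep H y = r"
    using coset_rep_closed(1)[OF assms(1,2)] assms(4) by (simp_all add: r_def coset_rep_def)
  then have "inv (coset_coord H x) \<otimes> coset_coord H y = inv x \<otimes> (r \<otimes> (inv r \<otimes> y))"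
    using assms(2,3) by (simp add: coset_coord_def flip: r_def) (simp add: inv_mult_group m_assoc)
  also have "\<dots> = inv x \<otimes> y"
    using r assms(3) by (simp add: m_assoc[symmetric])
  finally show ?thesis .
qed

lemma inj_on_coset_coord:
  assumes "subgroup H G" "x \<in> carrier G"
  shows "inj_on (coset_coord H) (x <# H)"
proof (rule inj_onI)
  fix y y' assume y: "y \<in> x <# H" and y': "y' \<in> x <# H"
    and eq: "coset_coord H y = coset_coord H y'"
  have "coset_rep H y = coset_rep H x" "coset_rep H y' = coset_rep H x"
    using y y' mem_lcos_iff_lcos_eq[OF assms] by (simp_all add: coset_rep_def)
  then show "y = y'"
    using eq y y' mem_lcos_iff_lcos_eq[OF assms] coset_rep_closed(1)[OF assms]
    by (simp add: coset_coord_def)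
qed

lemma infsum_same_lcos_le:
  fixes F :: "'a \<Rightarrow> ennreal"
  assumes "subgroup H G" "x \<in> carrier G"
  shows "(\<Sum>\<^sub>\<infinity>y\<in>carrier G. if x <# H = y <# H then F (coset_coord H y) else 0)
    \<le> (\<Sum>\<^sub>\<infinity>z\<in>H. F z)"
proof -
  have "(\<Sum>\<^sub>\<infinity>y\<in>carrier G. if x <# H = y <# H then F (coset_coord H y) else 0)
      = (\<Sum>\<^sub>\<infinity>y\<in>x <# H. F (coset_coord H y))"
    by (rule infsum_cong_neutral) (auto simp: mem_lcos_iff_lcos_eq[OF assms])
  also have "\<dots> = (\<Sum>\<^sub>\<infinity>z\<in>coset_coord H ` (x <# H). F z)"
    using infsum_reindex[OF inj_on_coset_coord[OF assms], of F] by (simp add: comp_def)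
  also have "\<dots> \<le> (\<Sum>\<^sub>\<infinity>z\<in>H. F z)"
    using coset_coord_in_subgroup[OF assms(1)] mem_lcos_iff_lcos_eq[OF assms]
    by (intro infsum_le_infsum_superset_ennreal) blast
  finally show ?thesis .
qed

lemma T1_extend_by_zero:
  assumes H: "subgroup H G" and f: "f \<in> T1 (G\<lparr>carrier := H\<rparr>)"
  shows "(\<lambda>x. if x \<in> H then f x else 0) \<in> T1 G"
proof -
  obtain f1 f2 where eq: "\<And>x y. x \<in> H \<Longrightarrow> y \<in> H \<Longrightarrow> f (inv x \<otimes> y) = f1 x y + f2 x y"
    and bound1: "(SUP x\<in>H. \<Sum>\<^sub>\<infinity> y\<in>H. ennreal (norm (f1 x y))) < \<infinity>"
    and bound2: "(SUP y\<in>H. \<Sum>\<^sub>\<infinity> x\<in>H. ennreal (norm (f2 x y))) < \<infinity>"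
    using f H unfolding T1_def by auto
  define g1 where
    "g1 x y = (if x <# H = y <# H then f1 (coset_coord H x) (coset_coord H y) else 0)" for x y
  define g2 where
    "g2 x y = (if x <# H = y <# H then f2 (coset_coord H x) (coset_coord H y) else 0)" for x y
  have decomp: "(if inv x \<otimes> y \<in> H then f (inv x \<otimes> y) else 0) = g1 x y + g2 x y"
    if x: "x \<in> carrier G" and y: "y \<in> carrier G" for x y
  proof (cases "x <# H = y <# H")
    case True
    then have "inv (coset_coord H x) \<otimes> coset_coord H y = inv x \<otimes> y" "inv x \<otimes> y \<in> H"
      using inv_coset_coord_mult_coset_coord[OF H x y] lcos_eq_iff[OF H x y] by simp_all
    with True show ?thesis
      using eq[of "coset_coord H x" "coset_coord H y"] coset_coord_in_subgroup[OF H] x y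
      by (simp add: g1_def g2_def)
  next
    case False
    then show ?thesis using lcos_eq_iff[OF H x y] by (simp add: g1_def g2_def)
  qed
  have rows: "(SUP x\<in>carrier G. \<Sum>\<^sub>\<infinity> y\<in>carrier G. ennreal (norm (g1 x y))) < \<infinity>"
  proof (rule le_less_trans[OF SUP_least bound1])
    fix x assume x: "x \<in> carrier G"
    have "(\<Sum>\<^sub>\<infinity> y\<in>carrier G. ennreal (norm (g1 x y)))
        \<le> (\<Sum>\<^sub>\<infinity> y\<in>H. ennreal (norm (f1 (coset_coord H x) y)))"
      using infsum_same_lcos_le[OF H x, of "\<lambda>y. ennreal (norm (f1 (coset_coord H x) y))"]
      by (simp add: g1_def if_distrib cong: if_cong)
    also have "\<dots> \<le> (SUP x\<in>H. \<Sum>\<^sub>\<infinity> y\<in>H. ennreal (norm (f1 x y)))"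
      using coset_coord_in_subgroup[OF H x] by (auto intro: SUP_upper)
    finally show "(\<Sum>\<^sub>\<infinity> y\<in>carrier G. ennreal (norm (g1 x y))) \<le> \<dots>" .
  qed
  have columns: "(SUP y\<in>carrier G. \<Sum>\<^sub>\<infinity> x\<in>carrier G. ennreal (norm (g2 x y))) < \<infinity>"
  proof (rule le_less_trans[OF SUP_least bound2])
    fix y assume y: "y \<in> carrier G"
    have "(\<Sum>\<^sub>\<infinity> x\<in>carrier G. ennreal (norm (g2 x y)))
        \<le> (\<Sum>\<^sub>\<infinity> x\<in>H. ennreal (norm (f2 x (coset_coord H y))))"
      using infsum_same_lcos_le[OF H y, of "\<lambda>x. ennreal (norm (f2 x (coset_coord H y)))"]
      by (simp add: g2_def if_distrib eq_commute cong: if_cong)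
    also have "\<dots> \<le> (SUP y\<in>H. \<Sum>\<^sub>\<infinity> x\<in>H. ennreal (norm (f2 x y)))"
      using coset_coord_in_subgroup[OF H y] by (auto intro: SUP_upper)
    finally show "(\<Sum>\<^sub>\<infinity> x\<in>carrier G. ennreal (norm (g2 x y))) \<le> \<dots>" .
  qed
  show ?thesis
    unfolding T1_def mem_Collect_eq
    using decomp rows columns by (intro exI[of _ g1] exI[of _ g2]) simp
qed

lemma T1_subgroup_subset_lp:
  assumes "subgroup H G" and "T1 G \<subseteq> lp G p"
  shows "T1 (G\<lparr>carrier := H\<rparr>) \<subseteq> lp (G\<lparr>carrier := H\<rparr>) p"
proof
  fix f assume "f \<in> T1 (G\<lparr>carrier := H\<rparr>)"
  then have "(\<lambda>x. if x \<in> H then f x else 0) \<in> lp G p"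
    using T1_extend_by_zero assms by blast
  then show "f \<in> lp (G\<lparr>carrier := H\<rparr>) p"
    by (rule lp_restrict_carrier[OF subgroup.subset[OF assms(1)]])
qed

end

theorem proposition3p4:
  fixes G :: "('a, 'b) monoid_scheme" and H :: "'a set"
  assumes "group G" and "subgroup H G"
  shows "Lit (G\<lparr>carrier := H\<rparr>) \<le> Lit G"
  unfolding Lit_def
  by (rule Inf_superset_mono) (use group.T1_subgroup_subset_lp[OF assms] in blast)

end
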